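(* There is $N_0$ such that for all integers $N\ge N_0$ the following holds. Let $r,d$ be positive integers with $\gcd(d,r)=1$, let $\Pi=r(r+d)\cdots(r+(N-1)d)$, and perform the following elimination process: for every prime factor $p$ of $\Pi$, remove one term $r+id$ ($0\le i\le N-1$) for which $\mathrm{ord}_p(r+id)$ is maximal among all terms $r+jd$, $0\le j\le N-1$ (ties resolved arbitrarily; each term is removed at most once). Let $M$ be the total number of removed terms. Then either both $d<N^2$ and $r<N^2$, or $M>N/2$.
   Context: For a prime $p$ and a nonzero integer $m$, $\mathrm{ord}_p(m)$ denotes the largest integer $e$ with $p^e\mid m$. *)

theory Defs
  imports "HOL-Computational_Algebra.Primes"
begin

definition ap_prod :: "nat \<Rightarrow> nat \<Rightarrow> nat \<Rightarrow> nat" where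
  "ap_prod r d N = (\<Prod>i<N. r + i * d)"

end

theory Submission
  imports Defs
begin

text \<open>
  Call the terms that are not removed the survivors. For every prime power \<open>p ^ k\<close>, the terms
  of the progression divisible by \<open>p ^ k\<close> are \<open>p ^ k\<close> apart in index (as \<open>p \<nmid> d\<close>), so at most
  \<open>1 + \<lfloor>(N - 1) / p ^ k\<rfloor>\<close> of them occur; one of them has maximal \<open>p\<close>-adic order and is
  removed. Hence at most \<open>\<lfloor>(N - 1) / p ^ k\<rfloor>\<close> survivors are divisible by \<open>p ^ k\<close>, and counting
  prime powers shows that the product of the survivors divides \<open>(N - 1)!\<close>. If \<open>d \<ge> N\<^sup>2\<close> or
  \<open>r \<ge> N\<^sup>2\<close>, all survivors except possibly \<open>r\<close> are at least \<open>N\<^sup>2\<close>, so with \<open>s\<close> survivors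
  \<open>N ^ (2 (s - 1)) \<le> (N - 1)! < N ^ (N - 2)\<close>, i.e. \<open>2 s < N\<close>.
\<close>

definition removal_choice :: "nat \<Rightarrow> nat \<Rightarrow> nat \<Rightarrow> (nat \<Rightarrow> nat) \<Rightarrow> bool" where
  "removal_choice r d N f \<longleftrightarrow>
     (\<forall>p. prime p \<and> p dvd ap_prod r d N \<longrightarrow>
        f p < N \<and> (\<forall>j<N. multiplicity p (r + j * d) \<le> multiplicity p (r + f p * d)))"

definition removed :: "nat \<Rightarrow> nat \<Rightarrow> nat \<Rightarrow> (nat \<Rightarrow> nat) \<Rightarrow> nat set" where
  "removed r d N f = f ` {p. prime p \<and> p dvd ap_prod r d N}"

lemma multiplicity_less_self:
  fixes p n :: nat
  assumes "1 < p" "0 < n"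
  shows "multiplicity p n < n"
proof -
  have "multiplicity p n < 2 ^ multiplicity p n" by simp
  also have "\<dots> \<le> p ^ multiplicity p n" using assms(1) by (simp add: power_mono)
  also have "\<dots> \<le> n" using multiplicity_dvd assms(2) by (rule dvd_imp_le)
  finally show ?thesis .
qed

lemma multiplicity_factor_less_prod:
  fixes u :: "'a \<Rightarrow> nat"
  assumes "1 < p" "finite I" "i \<in> I" "0 < prod u I"
  shows "multiplicity p (u i) < prod u I"
proof -
  have "u i dvd prod u I" using assms(2,3) by (rule dvd_prodI)
  then have "multiplicity p (u i) \<le> multiplicity p (prod u I)"
    using assms(4) by (intro dvd_imp_multiplicity_le) auto
  also have "\<dots> < prod u I" using assms(1,4) by (rule multiplicity_less_self)
  finally show ?thesis .
qed

lemma multiplicity_eq_card_prime_power_dvd: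
  fixes p n :: nat
  assumes "1 < p" "0 < n" "multiplicity p n \<le> K"
  shows "multiplicity p n = card {k\<in>{1..K}. p ^ k dvd n}"
proof -
  have iff: "p ^ k dvd n \<longleftrightarrow> k \<le> multiplicity p n" for k
    using power_dvd_iff_le_multiplicity[of n p k] assms(1,2) by simp
  have "{k\<in>{1..K}. p ^ k dvd n} = {1..multiplicity p n}"
    unfolding iff using assms(3) by auto
  then show ?thesis by simp
qed

lemma multiplicity_prod_eq_sum_card:
  fixes p :: nat and g :: "'a \<Rightarrow> nat"
  assumes "prime p" "finite A" "\<And>i. i \<in> A \<Longrightarrow> 0 < g i"
    and "\<And>i. i \<in> A \<Longrightarrow> multiplicity p (g i) \<le> K"
  shows "multiplicity p (prod g A) = (\<Sum>k\<in>{1..K}. card {i\<in>A. p ^ k dvd g i})"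
proof -
  have "multiplicity p (prod g A) = (\<Sum>i\<in>A. multiplicity p (g i))"
    using assms by (intro prime_elem_multiplicity_prod_distrib) (auto simp flip: neq0_conv)
  also have "\<dots> = (\<Sum>i\<in>A. \<Sum>k\<in>{1..K}. if p ^ k dvd g i then 1 else 0)"
  proof (rule sum.cong[OF refl])
    fix i assume "i \<in> A"
    then have "multiplicity p (g i) = card {k\<in>{1..K}. p ^ k dvd g i}"
      using assms prime_gt_1_nat by (intro multiplicity_eq_card_prime_power_dvd) auto
    then show "multiplicity p (g i) = (\<Sum>k\<in>{1..K}. if p ^ k dvd g i then 1 else 0)"
      by (simp add: sum.If_cases Int_def)
  qed
  also have "\<dots> = (\<Sum>k\<in>{1..K}. \<Sum>i\<in>A. if p ^ k dvd g i then 1 else 0)"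
    by (rule sum.swap)
  also have "\<dots> = (\<Sum>k\<in>{1..K}. card {i\<in>A. p ^ k dvd g i})"
    using assms(2) by (simp add: sum.If_cases Collect_conj_eq Int_commute)
  finally show ?thesis .
qed

lemma prod_dvd_prod_if_card_prime_power_dvd_le:
  fixes g :: "'a \<Rightarrow> nat" and h :: "'b \<Rightarrow> nat"
  assumes "finite A" "finite B" "\<And>i. i \<in> A \<Longrightarrow> 0 < g i" "\<And>j. j \<in> B \<Longrightarrow> 0 < h j"
    and le: "\<And>p k. prime p \<Longrightarrow> 1 \<le> k \<Longrightarrow>
               card {i\<in>A. p ^ k dvd g i} \<le> card {j\<in>B. p ^ k dvd h j}"
  shows "prod g A dvd prod h B"
proof (rule multiplicity_le_imp_dvd)
  have pos: "0 < prod g A" "0 < prod h B" using assms by (simp_all add: prod_pos)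
  then show "prod g A \<noteq> 0" by simp
  fix p :: nat assume p: "prime p"
  define K where "K = prod g A + prod h B"
  have bound_A: "multiplicity p (g i) \<le> K" if "i \<in> A" for i
    using multiplicity_factor_less_prod[OF prime_gt_1_nat[OF p] assms(1) that pos(1)]
    by (simp add: K_def)
  have bound_B: "multiplicity p (h j) \<le> K" if "j \<in> B" for j
    using multiplicity_factor_less_prod[OF prime_gt_1_nat[OF p] assms(2) that pos(2)]
    by (simp add: K_def)
  have "multiplicity p (prod g A) = (\<Sum>k\<in>{1..K}. card {i\<in>A. p ^ k dvd g i})"
    using assms(1,3) bound_A by (rule multiplicity_prod_eq_sum_card[OF p])
  also have "\<dots> \<le> (\<Sum>k\<in>{1..K}. card {j\<in>B. p ^ k dvd h j})"
    using le[OF p] by (intro sum_mono) simp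
  also have "\<dots> = multiplicity p (prod h B)"
    using assms(2,4) bound_B by (rule multiplicity_prod_eq_sum_card[OF p, symmetric])
  finally show "multiplicity p (prod g A) \<le> multiplicity p (prod h B)" .
qed

lemma card_ap_dvd_le:
  fixes q r d N :: nat
  assumes "coprime q d"
  shows "card {i. i < N \<and> q dvd r + i * d} \<le> Suc (card {m\<in>{1..N - 1}. q dvd m})"
proof (cases "{i. i < N \<and> q dvd r + i * d} = {}")
  case False
  define A where "A = {i. i < N \<and> q dvd r + i * d}"
  define a where "a = Min A"
  have fin: "finite A" unfolding A_def by simp
  have aA: "a \<in> A" using fin False unfolding a_def A_def[symmetric] by (rule Min_in)
  have amin: "\<And>i. i \<in> A \<Longrightarrow> a \<le> i" using fin unfolding a_def by simp
  have dvd_shift: "q dvd i - a" if "i \<in> A" for i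
  proof -
    have "q dvd (r + i * d) - (r + a * d)"
      using that aA unfolding A_def by (intro dvd_diff_nat) auto
    also have "(r + i * d) - (r + a * d) = (i - a) * d"
      by (simp add: diff_mult_distrib)
    finally show ?thesis using assms by (simp add: coprime_dvd_mult_left_iff)
  qed
  have "inj_on (\<lambda>i. i - a) (A - {a})"
    using amin by (intro inj_onI) (metis DiffD1 diff_add_inverse2 le_add_diff_inverse2)
  moreover have "(\<lambda>i. i - a) ` (A - {a}) \<subseteq> {m\<in>{1..N - 1}. q dvd m}"
    using amin dvd_shift by (force simp: A_def)
  ultimately have "card (A - {a}) \<le> card {m\<in>{1..N - 1}. q dvd m}"
    by (intro card_inj_on_le) auto
  then show ?thesis using aA fin unfolding A_def[symmetric] by (simp add: card_Diff_singleton)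
qed (metis card.empty le0)

lemma prime_dvd_ap_term_not_dvd_common_difference:
  fixes p r d i :: nat
  assumes "prime p" "coprime d r" "p dvd r + i * d"
  shows "\<not> p dvd d"
proof
  assume "p dvd d"
  then have "p dvd i * d" by simp
  then have "p dvd r" using assms(3) by (simp add: dvd_add_left_iff)
  with \<open>p dvd d\<close> assms(2) have "is_unit p" by (meson coprime_common_divisor)
  with assms(1) show False by simp
qed

lemma survivors_card_prime_power_dvd_le:
  fixes r d N k p :: nat
  assumes f: "removal_choice r d N f" and "0 < r" "coprime d r" "prime p" "1 \<le> k"
  shows "card {i\<in>{..<N} - removed r d N f. p ^ k dvd r + i * d}
           \<le> card {m\<in>{1..N - 1}. p ^ k dvd m}"
proof (cases "\<exists>i<N. p ^ k dvd r + i * d")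
  case False
  then have "{i\<in>{..<N} - removed r d N f. p ^ k dvd r + i * d} = {}" by auto
  then show ?thesis by (simp only: card.empty le0)
next
  case True
  then obtain i where i: "i < N" "p ^ k dvd r + i * d" by blast
  define A where "A = {i. i < N \<and> p ^ k dvd r + i * d}"
  have "p dvd p ^ k" using assms(5) by (cases k) simp_all
  then have p_dvd_term: "p dvd r + i * d" using i(2) by (rule dvd_trans)
  moreover have "r + i * d dvd ap_prod r d N"
    unfolding ap_prod_def using i(1) by (intro dvd_prodI) auto
  ultimately have p_dvd_prod: "p dvd ap_prod r d N" by (rule dvd_trans)
  then have fp: "f p < N" "multiplicity p (r + i * d) \<le> multiplicity p (r + f p * d)"
    using f i(1) assms(4) by (auto simp: removal_choice_def)
  have iff: "p ^ k dvd r + j * d \<longleftrightarrow> k \<le> multiplicity p (r + j * d)" for j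
    using power_dvd_iff_le_multiplicity[of "r + j * d" p k] assms(2,4) prime_gt_1_nat[of p]
    by simp
  have "p ^ k dvd r + f p * d" using i(2) fp(2) unfolding iff by linarith
  then have fpA: "f p \<in> A" using fp(1) by (simp add: A_def)
  have "f p \<in> removed r d N f" using p_dvd_prod assms(4) by (simp add: removed_def)
  then have "{i\<in>{..<N} - removed r d N f. p ^ k dvd r + i * d} \<subseteq> A - {f p}"
    by (auto simp: A_def)
  then have "card {i\<in>{..<N} - removed r d N f. p ^ k dvd r + i * d} \<le> card (A - {f p})"
    by (intro card_mono) (simp_all add: A_def)
  also have "\<dots> = card A - 1" using fpA by (simp add: A_def)
  also have "card A \<le> Suc (card {m\<in>{1..N - 1}. p ^ k dvd m})"
  proof -
    have "coprime (p ^ k) d"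
      using prime_dvd_ap_term_not_dvd_common_difference[OF assms(4,3) p_dvd_term] assms(4)
      by (simp add: prime_imp_coprime)
    then show ?thesis unfolding A_def by (rule card_ap_dvd_le)
  qed
  then have "card A - 1 \<le> card {m\<in>{1..N - 1}. p ^ k dvd m}" by simp
  finally show ?thesis .
qed

lemma survivors_prod_dvd_fact:
  fixes r d N :: nat
  assumes "removal_choice r d N f" "0 < r" "coprime d r"
  shows "(\<Prod>i\<in>{..<N} - removed r d N f. r + i * d) dvd fact (N - 1)"
proof -
  have "(\<Prod>i\<in>{..<N} - removed r d N f. r + i * d) dvd (\<Prod>m\<in>{1..N - 1}. m)"
    using survivors_card_prime_power_dvd_le[OF assms] assms(2)
    by (intro prod_dvd_prod_if_card_prime_power_dvd_le) auto
  then show ?thesis by (simp add: fact_prod)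
qed

lemma fact_le_power_pred: "fact n \<le> n ^ (n - 1)"
proof (induction n)
  case (Suc n)
  have "fact (Suc n) = Suc n * fact n" by simp
  also have "\<dots> \<le> Suc n * n ^ (n - 1)" using Suc.IH by (rule mult_le_mono2)
  also have "\<dots> \<le> Suc n * Suc n ^ (n - 1)" by (intro mult_le_mono2 power_mono) simp_all
  also have "\<dots> = Suc n ^ (Suc n - 1)" by (cases n) simp_all
  finally show ?case .
qed simp

lemma ap_prod_lower_bound:
  fixes r d c :: nat
  assumes "finite S" "0 < r" "0 < c" "c \<le> r \<or> c \<le> d"
  shows "c ^ (card S - 1) \<le> (\<Prod>i\<in>S. r + i * d)"
proof -
  have term_ge: "c \<le> r + i * d" if "0 < i" for i
  proof -
    have "d \<le> i * d" using that by simp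
    then show ?thesis using assms(4) by linarith
  qed
  have "c ^ (card S - 1) \<le> c ^ card (S - {0})"
    using assms(1,3) by (intro power_increasing) (auto simp: card_Diff_singleton_if)
  also have "\<dots> = (\<Prod>i\<in>S - {0}. c)" by simp
  also have "\<dots> \<le> (\<Prod>i\<in>S - {0}. r + i * d)"
    using term_ge by (intro prod_mono) auto
  also have "\<dots> \<le> (\<Prod>i\<in>S. r + i * d)"
    using assms(1,2) by (cases "0 \<in> S") (simp_all add: prod.remove)
  finally show ?thesis .
qed

theorem corollary1:
  shows "\<exists>N0::nat. \<forall>N\<ge>N0. \<forall>(r::nat) (d::nat) (f::nat \<Rightarrow> nat).
     0 < r \<longrightarrow> 0 < d \<longrightarrow> coprime d r \<longrightarrow>
     (\<forall>p. prime p \<and> p dvd ap_prod r d N \<longrightarrow>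
         f p < N \<and> (\<forall>j<N. multiplicity p (r + j * d) \<le> multiplicity p (r + f p * d))) \<longrightarrow>
     ((d < N^2 \<and> r < N^2) \<or>
      2 * card (f ` {p. prime p \<and> p dvd ap_prod r d N}) > N)"
proof (intro exI[of _ 3] allI impI)
  fix N r d :: nat and f :: "nat \<Rightarrow> nat"
  assume N: "3 \<le> N" and r: "0 < r" and "0 < d" and cop: "coprime d r"
    and "\<forall>p. prime p \<and> p dvd ap_prod r d N \<longrightarrow>
         f p < N \<and> (\<forall>j<N. multiplicity p (r + j * d) \<le> multiplicity p (r + f p * d))"
  then have f: "removal_choice r d N f" by (simp add: removal_choice_def)
  define S where "S = {..<N} - removed r d N f"
  have "removed r d N f \<subseteq> {..<N}" using f by (auto simp: removal_choice_def removed_def)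
  then have card_S: "card S = N - card (removed r d N f)"
    unfolding S_def by (simp add: card_Diff_subset finite_subset)
  show "(d < N^2 \<and> r < N^2) \<or> 2 * card (f ` {p. prime p \<and> p dvd ap_prod r d N}) > N"
  proof (cases "d < N^2 \<and> r < N^2")
    case False
    then have "(N\<^sup>2) ^ (card S - 1) \<le> (\<Prod>i\<in>S. r + i * d)"
      using r N by (intro ap_prod_lower_bound) (auto simp: S_def)
    then have "N ^ (2 * (card S - 1)) \<le> (\<Prod>i\<in>S. r + i * d)"
      by (simp add: power_mult)
    also have "\<dots> \<le> fact (N - 1)"
      using survivors_prod_dvd_fact[OF f r cop] by (simp add: S_def dvd_imp_le)
    also have "\<dots> \<le> (N - 1) ^ (N - 2)" using fact_le_power_pred[of "N - 1"] by (simp add: numeral_2_eq_2)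
    also have "\<dots> < N ^ (N - 2)" using N by (simp add: power_strict_mono)
    finally have "2 * (card S - 1) < N - 2" using N by (simp add: power_less_imp_less_exp)
    then have "N < 2 * card (removed r d N f)" using card_S N by arith
    then show ?thesis by (simp add: removed_def)
  qed simp
qed

end
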